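(* Let Assumption (A) be satisfied. For $\alpha\in[0,1]$ define $f^*_\alpha(\boldsymbol{x},s) = \sqrt{\alpha}\, f^*(\boldsymbol{x},s) + (1-\sqrt{\alpha})\sum_{s'=1}^K w_{s'}\, F^{-1}_{\nu^*_{s'}}\circ F_{\nu^*_s}\circ f^*(\boldsymbol{x},s)$ for $(\boldsymbol{x},s)\in\mathbb{R}^p\times[K]$. Then for every $\alpha\in[0,1]$, $$\mathcal{R}(f^*_\alpha) = (1-\sqrt{\alpha})^2\,\mathcal{R}(f^*_0) = (1-\sqrt{\alpha})^2\,\mathcal{U}(f^* ).$$
   Context: Let $p,K\ge 1$ be integers and $[K]=\{1,\dots,K\}$. Let $(\boldsymbol{X},S)$ be a random pair with values in $\mathbb{R}^p\times[K]$, with $\mathbb{P}(S=s)>0$ for all $s$, and let $f^*:\mathbb{R}^p\times[K]\to\mathbb{R}$ be measurable. Fix $\boldsymbol{w}\in\Delta^{K-1}$ (probability simplex). For measurable $f:\mathbb{R}^p\times[K]\to\mathbb{R}$: $\mathcal{R}(f)=\sum_{s=1}^K w_s\,\mathbb{E}[(f(\boldsymbol{X},S)-f^*(\boldsymbol{X},S))^2\mid S=s]$ and $\mathcal{U}(f)=\min_{\nu\in\mathcal{P}_2(\mathbb{R})}\sum_{s=1}^K w_s\,\mathsf{W}_2^2(\mathrm{Law}(f(\boldsymbol{X},S)\mid S=s),\nu)$, with $\mathcal{P}_2(\mathbb{R})$ the Borel probability measures on $\mathbb{R}$ with finite second moment and $\mathsf{W}_2$ the Wasserstein-2 distance. $\nu^*_s=\mathrm{Law}(f^*(\boldsymbol{X},S)\mid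 S=s)$; $F_\mu$ denotes a CDF and $F_\mu^{-1}(t)=\inf\{x:F_\mu(x)\ge t\}$. Assumption (A): $\nu^*_1,\dots,\nu^*_K$ are non-atomic with finite second moments. (By a companion result, $f^*_\alpha$ minimizes $\mathcal{R}(f)$ subject to $\mathcal{U}(f)\le\alpha\,\mathcal{U}(f^* )$.) *)

theory Defs
  imports "HOL-Probability.Probability"
begin

definition cond_meas :: "'a measure \<Rightarrow> ('a \<Rightarrow> nat) \<Rightarrow> nat \<Rightarrow> 'a measure" where
  "cond_meas M S s = uniform_measure M {\<omega> \<in> space M. S \<omega> = s}"

definition cond_law :: "'a measure \<Rightarrow> ('a \<Rightarrow> 'x) \<Rightarrow> ('a \<Rightarrow> nat) \<Rightarrow> ('x \<Rightarrow> nat \<Rightarrow> real) \<Rightarrow> nat \<Rightarrow> real measure" where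
  "cond_law M X S f s = distr (cond_meas M S s) borel (\<lambda>\<omega>. f (X \<omega>) (S \<omega>))"

definition quantile :: "real measure \<Rightarrow> real \<Rightarrow> real" where
  "quantile \<mu> t = Inf {x. cdf \<mu> x \<ge> t}"

definition P2 :: "real measure set" where
  "P2 = {\<nu>. sets \<nu> = sets borel \<and> prob_space \<nu> \<and> integrable \<nu> (\<lambda>x. x ^ 2)}"

definition couplings :: "real measure \<Rightarrow> real measure \<Rightarrow> (real \<times> real) measure set" where
  "couplings \<mu> \<nu> = {\<pi>. sets \<pi> = sets (borel :: (real \<times> real) measure) \<and> prob_space \<pi> \<and>
      distr \<pi> borel fst = \<mu> \<and> distr \<pi> borel snd = \<nu>}"

definition W2sq :: "real measure \<Rightarrow> real measure \<Rightarrow> real" where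
  "W2sq \<mu> \<nu> = enn2real (INF \<pi>\<in>couplings \<mu> \<nu>. \<integral>\<^sup>+ z. ennreal ((fst z - snd z) ^ 2) \<partial>\<pi>)"

definition risk :: "'a measure \<Rightarrow> ('a \<Rightarrow> 'x) \<Rightarrow> ('a \<Rightarrow> nat) \<Rightarrow> nat \<Rightarrow> (nat \<Rightarrow> real)
    \<Rightarrow> ('x \<Rightarrow> nat \<Rightarrow> real) \<Rightarrow> ('x \<Rightarrow> nat \<Rightarrow> real) \<Rightarrow> real" where
  "risk M X S K w fstar f = (\<Sum>s\<in>{1..K}. w s *
      integral\<^sup>L (cond_meas M S s) (\<lambda>\<omega>. (f (X \<omega>) (S \<omega>) - fstar (X \<omega>) (S \<omega>)) ^ 2))"

text \<open>Unfairness U(f) (the minimum over P_2 is written as an infimum).\<close>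
definition unfairness :: "'a measure \<Rightarrow> ('a \<Rightarrow> 'x) \<Rightarrow> ('a \<Rightarrow> nat) \<Rightarrow> nat \<Rightarrow> (nat \<Rightarrow> real)
    \<Rightarrow> ('x \<Rightarrow> nat \<Rightarrow> real) \<Rightarrow> real" where
  "unfairness M X S K w f = (INF \<nu>\<in>P2. \<Sum>s\<in>{1..K}. w s * W2sq (cond_law M X S f s) \<nu>)"

definition fstar_alpha :: "'a measure \<Rightarrow> ('a \<Rightarrow> 'x) \<Rightarrow> ('a \<Rightarrow> nat) \<Rightarrow> nat \<Rightarrow> (nat \<Rightarrow> real)
    \<Rightarrow> ('x \<Rightarrow> nat \<Rightarrow> real) \<Rightarrow> real \<Rightarrow> 'x \<Rightarrow> nat \<Rightarrow> real" where
  "fstar_alpha M X S K w fstar \<alpha> x s = sqrt \<alpha> * fstar x s + (1 - sqrt \<alpha>) *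
     (\<Sum>s'\<in>{1..K}. w s' * quantile (cond_law M X S fstar s') (cdf (cond_law M X S fstar s) (fstar x s)))"

end

theory Submission
  imports Defs
begin

(* On the real line the comonotone coupling (F^-1(U), G^-1(U)), U uniform on (0,1), is optimal:
   by Hoeffding's identity E[XY] is a double integral of P(X > a, Y > b) up to marginal terms,
   and the comonotone coupling maximises every P(X > a, Y > b). Hence
   W2^2(mu, nu) = int_0^1 (F^-1 - G^-1)^2, and the weighted barycenter problem decouples in t:
   it is solved by the law of sum_s w_s F_s^-1, with value
   sum_s w_s int_0^1 (F_s^-1 - sum_s' w_s' F_s'^-1)^2.
   When the group laws are atomless, F_s(f_star) is uniform given S = s, so the risk of the
   fair predictor f_0 is this same value; and f_alpha - f_star = (1 - sqrt alpha) (f_0 - f_star). *)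

definition square_integrable :: "'a measure \<Rightarrow> ('a \<Rightarrow> real) \<Rightarrow> bool" where
  "square_integrable M f \<longleftrightarrow> f \<in> borel_measurable M \<and> integrable M (\<lambda>x. (f x)\<^sup>2)"

lemma square_integrable_distr:
  assumes "g \<in> M \<rightarrow>\<^sub>M borel"
  shows "square_integrable M g \<longleftrightarrow> integrable (distr M borel g) (\<lambda>x. x\<^sup>2)"
  using assms by (simp add: square_integrable_def integrable_distr_eq)

lemma square_integrable_mult:
  assumes f: "square_integrable M f" and g: "square_integrable M g"
  shows "integrable M (\<lambda>x. f x * g x)"
proof (rule Bochner_Integration.integrable_bound)
  show "integrable M (\<lambda>x. (f x)\<^sup>2 + (g x)\<^sup>2)" "(\<lambda>x. f x * g x) \<in> borel_measurable M"
    using f g by (auto simp: square_integrable_def)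
  have "\<bar>f x * g x\<bar> \<le> (f x)\<^sup>2 + (g x)\<^sup>2" for x
  proof -
    have "2 * (\<bar>f x\<bar> * \<bar>g x\<bar>) \<le> (f x)\<^sup>2 + (g x)\<^sup>2"
      using sum_squares_bound[of "\<bar>f x\<bar>" "\<bar>g x\<bar>"] by (simp add: mult.assoc)
    moreover have "0 \<le> \<bar>f x\<bar> * \<bar>g x\<bar>"
      by simp
    ultimately show ?thesis
      unfolding abs_mult by linarith
  qed
  then show "AE x in M. norm (f x * g x) \<le> norm ((f x)\<^sup>2 + (g x)\<^sup>2)"
    by simp
qed

lemma square_integrable_add:
  assumes "square_integrable M f" "square_integrable M g"
  shows "square_integrable M (\<lambda>x. f x + g x)"
proof -
  have "(\<lambda>x. (f x + g x)\<^sup>2) = (\<lambda>x. (f x)\<^sup>2 + 2 * (f x * g x) + (g x)\<^sup>2)"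
    by (simp add: fun_eq_iff power2_sum)
  then show ?thesis
    using assms square_integrable_mult[OF assms] by (auto simp: square_integrable_def)
qed

lemma square_integrable_cmult:
  "square_integrable M f \<Longrightarrow> square_integrable M (\<lambda>x. c * f x)"
  by (auto simp: square_integrable_def power_mult_distrib)

lemma square_integrable_sum:
  "finite I \<Longrightarrow> (\<And>i. i \<in> I \<Longrightarrow> square_integrable M (f i)) \<Longrightarrow>
    square_integrable M (\<lambda>x. \<Sum>i\<in>I. c i * f i x)"
proof (induction I rule: finite_induct)
  case empty
  then show ?case by (simp add: square_integrable_def)
next
  case insert
  then show ?case by (simp add: square_integrable_add square_integrable_cmult)
qed

lemma integrable_square_diff:
  assumes "square_integrable M f" "square_integrable M g"
  shows "integrable M (\<lambda>x. (f x - g x)\<^sup>2)"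
  using square_integrable_add[OF assms(1) square_integrable_cmult[OF assms(2), of "-1"]]
  by (simp add: square_integrable_def)

lemma integral_square_diff:
  assumes "square_integrable M f" "square_integrable M g"
  shows "(\<integral>x. (f x - g x)\<^sup>2 \<partial>M) = (\<integral>x. (f x)\<^sup>2 \<partial>M) - 2 * (\<integral>x. f x * g x \<partial>M) + (\<integral>x. (g x)\<^sup>2 \<partial>M)"
proof -
  have "(\<lambda>x. (f x - g x)\<^sup>2) = (\<lambda>x. (f x)\<^sup>2 - 2 * (f x * g x) + (g x)\<^sup>2)"
    by (simp add: fun_eq_iff power2_diff)
  then show ?thesis
    using assms square_integrable_mult[OF assms] by (simp add: square_integrable_def)
qed

section \<open>Hoeffding's covariance identity\<close>

text \<open>Writing \<open>x\<close> as the integral of this kernel over \<open>a\<close> turns \<open>E[XY]\<close> into a double integral of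
  orthant probabilities.\<close>

definition hoeffding_kernel :: "real \<Rightarrow> real \<Rightarrow> real" where
  "hoeffding_kernel a x = (if a < x then 1 else 0) - (if a < 0 then 1 else 0)"

lemma borel_measurable_hoeffding_kernel[measurable]:
  "(\<lambda>p. hoeffding_kernel (f p) (g p)) \<in> borel_measurable M"
  if [measurable]: "f \<in> borel_measurable M" "g \<in> borel_measurable M"
  unfolding hoeffding_kernel_def by measurable

lemma hoeffding_kernel_eq_indicator:
  "(\<lambda>a. hoeffding_kernel a x) = (if 0 \<le> x then indicator {0..<x} else (\<lambda>a. - indicator {x..<0} a))"
  by (auto simp: hoeffding_kernel_def indicator_def fun_eq_iff)

lemma abs_hoeffding_kernel_eq_indicator:
  "(\<lambda>a. \<bar>hoeffding_kernel a x\<bar>) = (if 0 \<le> x then indicator {0..<x} else indicator {x..<0})"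
  by (auto simp: hoeffding_kernel_def indicator_def fun_eq_iff)

lemma integrable_hoeffding_kernel: "integrable lborel (\<lambda>a. hoeffding_kernel a x)"
  by (subst hoeffding_kernel_eq_indicator) (auto simp: emeasure_lborel_Ico)

lemma integral_hoeffding_kernel: "(\<integral>a. hoeffding_kernel a x \<partial>lborel) = x"
  by (subst hoeffding_kernel_eq_indicator) (auto simp: measure_lborel_Ico)

lemma integral_abs_hoeffding_kernel: "(\<integral>a. \<bar>hoeffding_kernel a x\<bar> \<partial>lborel) = \<bar>x\<bar>"
  by (subst abs_hoeffding_kernel_eq_indicator) (auto simp: measure_lborel_Ico)

lemma integral_product_lborel:
  fixes f g :: "real \<Rightarrow> real"
  assumes f: "integrable lborel f" and g: "integrable lborel g"
  shows "integrable (lborel \<Otimes>\<^sub>M lborel) (\<lambda>p. f (fst p) * g (snd p))"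
    and "(\<integral>p. f (fst p) * g (snd p) \<partial>(lborel \<Otimes>\<^sub>M lborel)) = integral\<^sup>L lborel f * integral\<^sup>L lborel g"
proof -
  have [measurable]: "f \<in> borel_measurable borel" "g \<in> borel_measurable borel"
    using f g by (auto dest: borel_measurable_integrable)
  show *: "integrable (lborel \<Otimes>\<^sub>M lborel) (\<lambda>p. f (fst p) * g (snd p))"
    by (rule lborel_pair.Fubini_integrable) (use f g in \<open>auto simp: abs_mult\<close>)
  show "(\<integral>p. f (fst p) * g (snd p) \<partial>(lborel \<Otimes>\<^sub>M lborel)) = integral\<^sup>L lborel f * integral\<^sup>L lborel g"
    using lborel_pair.integral_fst'[OF *] by simp
qed

lemma hoeffding_identity:
  fixes P :: "(real \<times> real) measure"
  assumes "prob_space P" and [measurable_cong]: "sets P = sets (borel \<Otimes>\<^sub>M borel)"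
    and "square_integrable P fst" "square_integrable P snd"
  shows "integrable (lborel \<Otimes>\<^sub>M lborel)
      (\<lambda>ab. \<integral>z. hoeffding_kernel (fst ab) (fst z) * hoeffding_kernel (snd ab) (snd z) \<partial>P)"
    and "(\<integral>z. fst z * snd z \<partial>P) = (\<integral>ab. (\<integral>z. hoeffding_kernel (fst ab) (fst z) *
      hoeffding_kernel (snd ab) (snd z) \<partial>P) \<partial>(lborel \<Otimes>\<^sub>M lborel))"
proof -
  interpret prob_space P by fact
  interpret N: sigma_finite_measure "lborel \<Otimes>\<^sub>M lborel :: (real \<times> real) measure"
    by (intro sigma_finite_pair_measure) (auto intro: lborel.sigma_finite_measure_axioms)
  interpret Q: pair_sigma_finite P "lborel \<Otimes>\<^sub>M lborel :: (real \<times> real) measure" ..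
  define G where "G z = (\<lambda>ab. hoeffding_kernel (fst ab) (fst z) * hoeffding_kernel (snd ab) (snd z))"
    for z :: "real \<times> real"
  have [measurable]: "case_prod G \<in> borel_measurable (P \<Otimes>\<^sub>M (lborel \<Otimes>\<^sub>M lborel))"
    unfolding G_def case_prod_beta' by measurable
  have inner: "integrable (lborel \<Otimes>\<^sub>M lborel) (G z)" "integral\<^sup>L (lborel \<Otimes>\<^sub>M lborel) (G z) = fst z * snd z"
    for z
    using integral_product_lborel[OF integrable_hoeffding_kernel integrable_hoeffding_kernel]
    by (simp_all add: G_def integral_hoeffding_kernel)
  have inner_abs: "(\<integral>ab. \<bar>G z ab\<bar> \<partial>(lborel \<Otimes>\<^sub>M lborel)) = \<bar>fst z * snd z\<bar>" for z
    using integral_product_lborel(2)[of "\<lambda>a. \<bar>hoeffding_kernel a (fst z)\<bar>" "\<lambda>a. \<bar>hoeffding_kernel a (snd z)\<bar>"]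
    by (simp add: G_def abs_mult integrable_hoeffding_kernel integral_abs_hoeffding_kernel)
  have "integrable P (\<lambda>z. \<bar>fst z * snd z\<bar>)"
    using square_integrable_mult[OF assms(3,4)] by (rule integrable_abs)
  then have G: "integrable (P \<Otimes>\<^sub>M (lborel \<Otimes>\<^sub>M lborel)) (case_prod G)"
    by (intro Q.Fubini_integrable) (simp_all add: inner inner_abs)
  show "integrable (lborel \<Otimes>\<^sub>M lborel)
      (\<lambda>ab. \<integral>z. hoeffding_kernel (fst ab) (fst z) * hoeffding_kernel (snd ab) (snd z) \<partial>P)"
    using Q.integrable_snd[OF G] by (simp add: G_def)
  have "(\<integral>z. fst z * snd z \<partial>P) = (\<integral>z. (\<integral>ab. G z ab \<partial>(lborel \<Otimes>\<^sub>M lborel)) \<partial>P)"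
    by (simp add: inner)
  also have "\<dots> = (\<integral>ab. (\<integral>z. G z ab \<partial>P) \<partial>(lborel \<Otimes>\<^sub>M lborel))"
    using Q.Fubini_integral[OF G] by simp
  finally show "(\<integral>z. fst z * snd z \<partial>P) = (\<integral>ab. (\<integral>z. hoeffding_kernel (fst ab) (fst z) *
      hoeffding_kernel (snd ab) (snd z) \<partial>P) \<partial>(lborel \<Otimes>\<^sub>M lborel))"
    by (simp add: G_def)
qed

abbreviation uniform01 :: "real measure" where
  "uniform01 \<equiv> restrict_space lborel {0<..<1}"

lemma prob_space_uniform01: "prob_space uniform01"
  by (auto simp: emeasure_restrict_space space_restrict_space intro!: prob_spaceI)

lemma space_uniform01: "space uniform01 = {0<..<1}"
  by (simp add: space_restrict_space)

lemma quantile_le_iff: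
  assumes "real_distribution \<mu>" "0 < t" "t < 1"
  shows "quantile \<mu> t \<le> x \<longleftrightarrow> t \<le> cdf \<mu> x"
proof -
  interpret cdf_distribution \<mu>
    using assms(1) by (simp add: cdf_distribution_def)
  show ?thesis
    unfolding quantile_def by (rule pseudoinverse[OF assms(2,3), symmetric])
qed

lemma distr_quantile_uniform01:
  assumes "real_distribution \<mu>"
  shows "distr uniform01 borel (quantile \<mu>) = \<mu>"
proof -
  interpret cdf_distribution \<mu>
    using assms by (simp add: cdf_distribution_def)
  show ?thesis
    unfolding quantile_def[abs_def] by (rule distr_I_eq_M)
qed

lemma measurable_quantile_uniform01:
  assumes "real_distribution \<mu>"
  shows "quantile \<mu> \<in> borel_measurable uniform01"
proof -
  interpret cdf_distribution \<mu>
    using assms by (simp add: cdf_distribution_def)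
  have sets: "sets uniform01 = sets (restrict_space borel {0<..<1::real})"
    by (rule sets_restrict_space_cong) simp
  show ?thesis
    unfolding quantile_def[abs_def] measurable_cong_sets[OF sets refl] by (rule measurable_CI)
qed

lemma borel_measurable_quantile:
  assumes "real_distribution \<mu>"
  shows "quantile \<mu> \<in> borel_measurable borel"
proof -
  interpret cdf_distribution \<mu>
    using assms by (simp add: cdf_distribution_def)
  have "{x. t \<le> cdf \<mu> x} = UNIV" if "t \<le> 0" for t
    using order_trans[OF that cdf_nonneg] by auto
  then have "mono_on {..0} (quantile \<mu>)"
    by (intro mono_onI) (simp add: quantile_def)
  moreover have "{x. t \<le> cdf \<mu> x} = {}" if "1 < t" for t
    using le_less_trans[OF cdf_bounded_prob that] by (auto simp: not_le)
  then have "mono_on {1<..} (quantile \<mu>)"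
    by (intro mono_onI) (simp add: quantile_def)
  moreover have "mono_on {0<..<1} (quantile \<mu>)"
    unfolding quantile_def[abs_def] by (rule mono_I)
  moreover have "mono_on {1} (quantile \<mu>)"
    by (simp add: mono_on_def)
  moreover have "\<Union>{{..0}, {0<..<1}, {1}, {1<..}} = (UNIV :: real set)"
    by auto
  ultimately show ?thesis
    by (intro borel_measurable_piecewise_mono[of "{{..0}, {0<..<1}, {1}, {1<..}}"]) auto
qed

lemma borel_measurable_cdf:
  assumes "real_distribution \<mu>"
  shows "cdf \<mu> \<in> borel_measurable borel"
  using assms by (simp add: cdf_distribution.measurable_C cdf_distribution_def)

lemma integral_quantile_uniform01:
  fixes g :: "real \<Rightarrow> real"
  assumes "real_distribution \<mu>" "g \<in> borel_measurable borel"
  shows "(\<integral>x. g x \<partial>\<mu>) = (\<integral>t. g (quantile \<mu> t) \<partial>uniform01)"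
proof -
  have "(\<integral>t. g (quantile \<mu> t) \<partial>uniform01) = (\<integral>x. g x \<partial>distr uniform01 borel (quantile \<mu>))"
    by (rule integral_distr[symmetric, OF measurable_quantile_uniform01[OF assms(1)] assms(2)])
  then show ?thesis
    by (simp add: distr_quantile_uniform01[OF assms(1)])
qed

lemma square_integrable_quantile:
  assumes "real_distribution \<mu>" "integrable \<mu> (\<lambda>x. x\<^sup>2)"
  shows "square_integrable uniform01 (quantile \<mu>)"
  using assms by (simp add: square_integrable_distr measurable_quantile_uniform01 distr_quantile_uniform01)

lemma cdf_quantile:
  assumes "real_distribution \<mu>" "\<And>x. measure \<mu> {x} = 0" "0 < t" "t < 1"
  shows "cdf \<mu> (quantile \<mu> t) = t"
proof -
  interpret real_distribution \<mu> by fact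
  have below: "cdf \<mu> x < t" if "x < quantile \<mu> t" for x
    using quantile_le_iff[OF assms(1,3,4), of x] that by auto
  have "isCont (cdf \<mu>) (quantile \<mu> t)"
    using isCont_cdf assms(2) by simp
  then have "(cdf \<mu> \<longlongrightarrow> cdf \<mu> (quantile \<mu> t)) (at_left (quantile \<mu> t))"
    by (simp add: isCont_def filterlim_at_split)
  moreover have "eventually (\<lambda>x. cdf \<mu> x \<le> t) (at_left (quantile \<mu> t))"
    by (rule eventually_at_leftI[of "quantile \<mu> t - 1"]) (use below in \<open>auto intro: less_imp_le\<close>)
  ultimately have "cdf \<mu> (quantile \<mu> t) \<le> t"
    by (rule tendsto_upperbound) simp
  moreover have "t \<le> cdf \<mu> (quantile \<mu> t)"
    using quantile_le_iff[OF assms(1,3,4), of "quantile \<mu> t"] by simp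
  ultimately show ?thesis
    by simp
qed

section \<open>Optimality of the comonotone coupling\<close>

abbreviation quadratic_cost :: "(real \<times> real) measure \<Rightarrow> ennreal" where
  "quadratic_cost \<pi> \<equiv> \<integral>\<^sup>+z. ennreal ((fst z - snd z)\<^sup>2) \<partial>\<pi>"

lemma prob_space_couplings: "\<pi> \<in> couplings \<mu> \<nu> \<Longrightarrow> prob_space \<pi>"
  by (simp add: couplings_def)

lemma sets_couplings:
  assumes "\<pi> \<in> couplings \<mu> \<nu>"
  shows "sets \<pi> = sets (borel \<Otimes>\<^sub>M borel)"
proof -
  have "sets (borel \<Otimes>\<^sub>M borel :: (real \<times> real) measure) = sets borel"
    by (subst borel_prod) (rule refl)
  then show ?thesis
    using assms by (simp add: couplings_def)
qed

lemma space_couplings: "\<pi> \<in> couplings \<mu> \<nu> \<Longrightarrow> space \<pi> = UNIV"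
  unfolding couplings_def using sets_eq_imp_space_eq by fastforce

lemma measurable_fst_couplings: "\<pi> \<in> couplings \<mu> \<nu> \<Longrightarrow> fst \<in> borel_measurable \<pi>"
  by (simp add: measurable_cong_sets[OF sets_couplings refl])

lemma measurable_snd_couplings: "\<pi> \<in> couplings \<mu> \<nu> \<Longrightarrow> snd \<in> borel_measurable \<pi>"
  by (simp add: measurable_cong_sets[OF sets_couplings refl])

lemma integral_fst_couplings:
  fixes f :: "real \<Rightarrow> real"
  assumes "\<pi> \<in> couplings \<mu> \<nu>" "f \<in> borel_measurable borel"
  shows "(\<integral>z. f (fst z) \<partial>\<pi>) = (\<integral>x. f x \<partial>\<mu>)"
  using assms integral_distr[OF measurable_fst_couplings[OF assms(1)] assms(2)]
  by (simp add: couplings_def)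

lemma integral_snd_couplings:
  fixes f :: "real \<Rightarrow> real"
  assumes "\<pi> \<in> couplings \<mu> \<nu>" "f \<in> borel_measurable borel"
  shows "(\<integral>z. f (snd z) \<partial>\<pi>) = (\<integral>x. f x \<partial>\<nu>)"
  using assms integral_distr[OF measurable_snd_couplings[OF assms(1)] assms(2)]
  by (simp add: couplings_def)

lemma measure_couplings_marginals:
  assumes "\<pi> \<in> couplings \<mu> \<nu>" "A \<in> sets borel"
  shows "measure \<pi> (A \<times> UNIV) = measure \<mu> A" and "measure \<pi> (UNIV \<times> A) = measure \<nu> A"
  using assms measure_distr[OF measurable_fst_couplings[OF assms(1)] assms(2)]
    measure_distr[OF measurable_snd_couplings[OF assms(1)] assms(2)]
  by (simp_all add: couplings_def space_couplings[OF assms(1)] vimage_fst vimage_snd)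

lemma square_integrable_couplings:
  assumes "\<pi> \<in> couplings \<mu> \<nu>" "integrable \<mu> (\<lambda>x. x\<^sup>2)" "integrable \<nu> (\<lambda>x. x\<^sup>2)"
  shows "square_integrable \<pi> fst" and "square_integrable \<pi> snd"
  using assms measurable_fst_couplings[OF assms(1)] measurable_snd_couplings[OF assms(1)]
  by (simp_all add: square_integrable_distr couplings_def)

lemma measurable_fst_borel[measurable]: "fst \<in> (borel :: (real \<times> real) measure) \<rightarrow>\<^sub>M borel"
  using measurable_fst[of "borel :: real measure" "borel :: real measure"] by (simp add: borel_prod)

lemma measurable_snd_borel[measurable]: "snd \<in> (borel :: (real \<times> real) measure) \<rightarrow>\<^sub>M borel"
  using measurable_snd[of "borel :: real measure" "borel :: real measure"] by (simp add: borel_prod)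

lemma distr_pair_in_couplings:
  assumes "prob_space M" "g \<in> borel_measurable M" "h \<in> borel_measurable M"
  shows "distr M borel (\<lambda>t. (g t, h t)) \<in> couplings (distr M borel g) (distr M borel h)"
proof -
  have pair: "(\<lambda>t. (g t, h t)) \<in> M \<rightarrow>\<^sub>M (borel :: (real \<times> real) measure)"
    using assms(2,3) by measurable
  show ?thesis
    unfolding couplings_def
    using prob_space.prob_space_distr[OF assms(1) pair]
      distr_distr[OF measurable_fst_borel pair] distr_distr[OF measurable_snd_borel pair]
    by (simp add: comp_def)
qed

definition comonotone_coupling :: "real measure \<Rightarrow> real measure \<Rightarrow> (real \<times> real) measure" where
  "comonotone_coupling \<mu> \<nu> = distr uniform01 borel (\<lambda>t. (quantile \<mu> t, quantile \<nu> t))"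

lemma comonotone_coupling_in_couplings:
  assumes "real_distribution \<mu>" "real_distribution \<nu>"
  shows "comonotone_coupling \<mu> \<nu> \<in> couplings \<mu> \<nu>"
  using distr_pair_in_couplings[OF prob_space_uniform01
      measurable_quantile_uniform01[OF assms(1)] measurable_quantile_uniform01[OF assms(2)]]
  by (simp add: comonotone_coupling_def distr_quantile_uniform01 assms)

lemma integral_hoeffding_kernel_couplings:
  assumes "\<pi> \<in> couplings \<mu> \<nu>"
  shows "(\<integral>z. hoeffding_kernel a (fst z) * hoeffding_kernel b (snd z) \<partial>\<pi>) =
    measure \<pi> ({a<..} \<times> {b<..}) - (if b < 0 then 1 else 0) * measure \<mu> {a<..}
      - (if a < 0 then 1 else 0) * measure \<nu> {b<..} + (if a < 0 \<and> b < 0 then 1 else 0)"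
proof -
  interpret prob_space \<pi>
    using assms by (rule prob_space_couplings)
  have "S \<times> T \<in> sets \<pi>" if "open S" "open T" for S T :: "real set"
    using assms borel_open[OF open_Times[OF that]] by (simp add: couplings_def)
  then have sets: "{a<..} \<times> {b<..} \<in> sets \<pi>" "{a<..} \<times> UNIV \<in> sets \<pi>" "UNIV \<times> {b<..} \<in> sets \<pi>"
    by auto
  have "(\<lambda>z. hoeffding_kernel a (fst z) * hoeffding_kernel b (snd z)) = (\<lambda>z.
      indicator ({a<..} \<times> {b<..}) z - (if b < 0 then 1 else 0) * indicator ({a<..} \<times> UNIV) z
      - (if a < 0 then 1 else 0) * indicator (UNIV \<times> {b<..}) z + (if a < 0 \<and> b < 0 then 1 else 0))"
    by (auto simp: fun_eq_iff hoeffding_kernel_def indicator_def)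
  then have "(\<integral>z. hoeffding_kernel a (fst z) * hoeffding_kernel b (snd z) \<partial>\<pi>) =
    measure \<pi> ({a<..} \<times> {b<..}) - (if b < 0 then 1 else 0) * measure \<pi> ({a<..} \<times> UNIV)
      - (if a < 0 then 1 else 0) * measure \<pi> (UNIV \<times> {b<..}) + (if a < 0 \<and> b < 0 then 1 else 0)"
    using sets integrable_real_indicator[OF sets(1)] integrable_real_indicator[OF sets(2)]
      integrable_real_indicator[OF sets(3)]
    by (simp add: Bochner_Integration.integral_add Bochner_Integration.integral_diff prob_space
        less_top[symmetric] Int_absorb2 sets.sets_into_space)
  then show ?thesis
    by (simp add: measure_couplings_marginals[OF assms])
qed

lemma measure_upper_orthant_le:
  assumes "\<pi> \<in> couplings \<mu> \<nu>"
  shows "measure \<pi> ({a<..} \<times> {b<..}) \<le> min (measure \<mu> {a<..}) (measure \<nu> {b<..})"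
proof -
  interpret prob_space \<pi>
    using assms by (rule prob_space_couplings)
  have "S \<times> T \<in> sets \<pi>" if "open S" "open T" for S T :: "real set"
    using assms borel_open[OF open_Times[OF that]] by (simp add: couplings_def)
  then have "{a<..} \<times> UNIV \<in> sets \<pi>" "UNIV \<times> {b<..} \<in> sets \<pi>"
    by auto
  then have "measure \<pi> ({a<..} \<times> {b<..}) \<le> measure \<pi> ({a<..} \<times> UNIV)"
    "measure \<pi> ({a<..} \<times> {b<..}) \<le> measure \<pi> (UNIV \<times> {b<..})"
    by (auto intro!: finite_measure_mono)
  then show ?thesis
    by (simp add: measure_couplings_marginals[OF assms])
qed

lemma measure_Ioi_eq_cdf:
  assumes "real_distribution \<mu>"
  shows "measure \<mu> {a<..} = 1 - cdf \<mu> a"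
proof -
  interpret real_distribution \<mu> by fact
  have "{a<..} = space \<mu> - {..a}"
    by auto
  then show ?thesis
    using prob_compl[of "{..a}"] by (simp add: cdf_def2)
qed

lemma measure_comonotone_upper_orthant:
  assumes \<mu>: "real_distribution \<mu>" and \<nu>: "real_distribution \<nu>"
  shows "measure (comonotone_coupling \<mu> \<nu>) ({a<..} \<times> {b<..}) = min (measure \<mu> {a<..}) (measure \<nu> {b<..})"
proof -
  interpret \<mu>: real_distribution \<mu> by fact
  interpret \<nu>: real_distribution \<nu> by fact
  define c where "c = max (cdf \<mu> a) (cdf \<nu> b)"
  have c: "0 \<le> c" "c \<le> 1"
    using \<mu>.cdf_nonneg[of a] \<mu>.cdf_bounded_prob[of a] \<nu>.cdf_bounded_prob[of b] by (auto simp: c_def)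
  have key: "c < t \<longleftrightarrow> a < quantile \<mu> t \<and> b < quantile \<nu> t" if "0 < t" "t < 1" for t
  proof -
    have "a < quantile \<mu> t \<longleftrightarrow> cdf \<mu> a < t" "b < quantile \<nu> t \<longleftrightarrow> cdf \<nu> b < t"
      using quantile_le_iff[OF \<mu> that, of a] quantile_le_iff[OF \<nu> that, of b] by (metis not_le)+
    then show ?thesis
      by (simp add: c_def)
  qed
  have "t \<in> (\<lambda>t. (quantile \<mu> t, quantile \<nu> t)) -` ({a<..} \<times> {b<..}) \<inter> space uniform01 \<longleftrightarrow> t \<in> {c<..<1}"
    for t
  proof (cases "0 < t \<and> t < 1")
    case True
    then show ?thesis
      using key[of t] by (auto simp: space_uniform01)
  next
    case False
    then show ?thesis
      using c by (auto simp: space_uniform01)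
  qed
  then have preimage: "(\<lambda>t. (quantile \<mu> t, quantile \<nu> t)) -` ({a<..} \<times> {b<..}) \<inter> space uniform01 = {c<..<1}"
    by blast
  have "(\<lambda>t. (quantile \<mu> t, quantile \<nu> t)) \<in> uniform01 \<rightarrow>\<^sub>M (borel :: (real \<times> real) measure)"
    using measurable_quantile_uniform01[OF \<mu>] measurable_quantile_uniform01[OF \<nu>] by measurable
  moreover have "{a<..} \<times> {b<..} \<in> sets (borel :: (real \<times> real) measure)"
    by (intro borel_open open_Times) auto
  ultimately have "measure (comonotone_coupling \<mu> \<nu>) ({a<..} \<times> {b<..}) = measure uniform01 {c<..<1}"
    unfolding comonotone_coupling_def preimage[symmetric] by (rule measure_distr)
  also have "\<dots> = 1 - c"
    using c by (subst measure_restrict_space) auto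
  finally show ?thesis
    by (auto simp: measure_Ioi_eq_cdf \<mu> \<nu> c_def min_def max_def)
qed

lemma integral_hoeffding_kernel_le_comonotone:
  assumes "real_distribution \<mu>" "real_distribution \<nu>" "\<pi> \<in> couplings \<mu> \<nu>"
  shows "(\<integral>z. hoeffding_kernel a (fst z) * hoeffding_kernel b (snd z) \<partial>\<pi>) \<le>
    (\<integral>z. hoeffding_kernel a (fst z) * hoeffding_kernel b (snd z) \<partial>comonotone_coupling \<mu> \<nu>)"
  using measure_upper_orthant_le[OF assms(3), of a b] measure_comonotone_upper_orthant[OF assms(1,2), of a b]
  by (simp add: integral_hoeffding_kernel_couplings[OF assms(3)]
      integral_hoeffding_kernel_couplings[OF comonotone_coupling_in_couplings[OF assms(1,2)]])

lemma integral_mult_le_comonotone: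
  assumes "real_distribution \<mu>" "real_distribution \<nu>"
    and "integrable \<mu> (\<lambda>x. x\<^sup>2)" "integrable \<nu> (\<lambda>x. x\<^sup>2)" and "\<pi> \<in> couplings \<mu> \<nu>"
  shows "(\<integral>z. fst z * snd z \<partial>\<pi>) \<le> (\<integral>z. fst z * snd z \<partial>comonotone_coupling \<mu> \<nu>)"
proof -
  have hoeffding: "integrable (lborel \<Otimes>\<^sub>M lborel)
      (\<lambda>ab. \<integral>z. hoeffding_kernel (fst ab) (fst z) * hoeffding_kernel (snd ab) (snd z) \<partial>\<rho>)"
    "(\<integral>z. fst z * snd z \<partial>\<rho>) = (\<integral>ab. (\<integral>z. hoeffding_kernel (fst ab) (fst z) *
      hoeffding_kernel (snd ab) (snd z) \<partial>\<rho>) \<partial>(lborel \<Otimes>\<^sub>M lborel))"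
    if "\<rho> \<in> couplings \<mu> \<nu>" for \<rho>
    using hoeffding_identity[OF prob_space_couplings[OF that] sets_couplings[OF that]
        square_integrable_couplings[OF that assms(3,4)]] by auto
  note \<pi>\<^sub>0 = comonotone_coupling_in_couplings[OF assms(1,2)]
  show ?thesis
    unfolding hoeffding(2)[OF assms(5)] hoeffding(2)[OF \<pi>\<^sub>0]
    by (rule integral_mono[OF hoeffding(1)[OF assms(5)] hoeffding(1)[OF \<pi>\<^sub>0]])
      (use integral_hoeffding_kernel_le_comonotone[OF assms(1,2,5)] in simp)
qed

lemma INF_quadratic_cost_le:
  assumes "prob_space M" "square_integrable M g" "square_integrable M h"
  shows "(INF \<pi>\<in>couplings (distr M borel g) (distr M borel h). quadratic_cost \<pi>)
    \<le> ennreal (\<integral>t. (g t - h t)\<^sup>2 \<partial>M)"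
proof -
  have [measurable]: "g \<in> borel_measurable M" "h \<in> borel_measurable M"
    using assms(2,3) by (simp_all add: square_integrable_def)
  have "(INF \<pi>\<in>couplings (distr M borel g) (distr M borel h). quadratic_cost \<pi>)
      \<le> quadratic_cost (distr M borel (\<lambda>t. (g t, h t)))"
    by (rule INF_lower[OF distr_pair_in_couplings[OF assms(1)]]) simp_all
  also have "\<dots> = (\<integral>\<^sup>+t. ennreal ((g t - h t)\<^sup>2) \<partial>M)"
    by (subst nn_integral_distr) simp_all
  also have "\<dots> = ennreal (\<integral>t. (g t - h t)\<^sup>2 \<partial>M)"
    by (rule nn_integral_eq_integral[OF integrable_square_diff[OF assms(2,3)]]) simp
  finally show ?thesis .
qed

lemma W2sq_distr_le:
  assumes "prob_space M" "square_integrable M g" "square_integrable M h"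
  shows "W2sq (distr M borel g) (distr M borel h) \<le> (\<integral>t. (g t - h t)\<^sup>2 \<partial>M)"
  unfolding W2sq_def using enn2real_mono[OF INF_quadratic_cost_le[OF assms]]
  by (simp add: integral_nonneg_AE)

lemma quadratic_cost_ge_quantile:
  assumes \<mu>: "real_distribution \<mu>" and \<nu>: "real_distribution \<nu>"
    and "integrable \<mu> (\<lambda>x. x\<^sup>2)" "integrable \<nu> (\<lambda>x. x\<^sup>2)" and \<pi>: "\<pi> \<in> couplings \<mu> \<nu>"
  shows "ennreal (\<integral>t. (quantile \<mu> t - quantile \<nu> t)\<^sup>2 \<partial>uniform01) \<le> quadratic_cost \<pi>"
proof -
  note \<pi>\<^sub>0 = comonotone_coupling_in_couplings[OF \<mu> \<nu>]
  have cost: "(\<integral>z. (fst z - snd z)\<^sup>2 \<partial>\<rho>) =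
      (\<integral>x. x\<^sup>2 \<partial>\<mu>) - 2 * (\<integral>z. fst z * snd z \<partial>\<rho>) + (\<integral>x. x\<^sup>2 \<partial>\<nu>)"
    if "\<rho> \<in> couplings \<mu> \<nu>" for \<rho>
  proof -
    have sq: "(\<lambda>x::real. x\<^sup>2) \<in> borel_measurable borel"
      by measurable
    show ?thesis
      using integral_square_diff[OF square_integrable_couplings[OF that assms(3,4)]]
      by (simp add: integral_fst_couplings[OF that sq] integral_snd_couplings[OF that sq])
  qed
  have "(\<lambda>t. (quantile \<mu> t, quantile \<nu> t)) \<in> uniform01 \<rightarrow>\<^sub>M (borel :: (real \<times> real) measure)"
    using measurable_quantile_uniform01[OF \<mu>] measurable_quantile_uniform01[OF \<nu>] by measurable
  then have "(\<integral>t. (quantile \<mu> t - quantile \<nu> t)\<^sup>2 \<partial>uniform01) =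
      (\<integral>z. (fst z - snd z)\<^sup>2 \<partial>comonotone_coupling \<mu> \<nu>)"
    unfolding comonotone_coupling_def by (subst integral_distr) simp_all
  also have "\<dots> \<le> (\<integral>z. (fst z - snd z)\<^sup>2 \<partial>\<pi>)"
    using integral_mult_le_comonotone[OF assms] by (simp add: cost[OF \<pi>\<^sub>0] cost[OF \<pi>])
  finally have "ennreal (\<integral>t. (quantile \<mu> t - quantile \<nu> t)\<^sup>2 \<partial>uniform01) \<le> ennreal (\<integral>z. (fst z - snd z)\<^sup>2 \<partial>\<pi>)"
    by (rule ennreal_leI)
  also have "\<dots> = quadratic_cost \<pi>"
    by (rule nn_integral_eq_integral[symmetric,
          OF integrable_square_diff[OF square_integrable_couplings[OF \<pi> assms(3,4)]]]) simp
  finally show ?thesis .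
qed

lemma W2sq_quantile:
  assumes \<mu>: "real_distribution \<mu>" and \<nu>: "real_distribution \<nu>"
    and "integrable \<mu> (\<lambda>x. x\<^sup>2)" "integrable \<nu> (\<lambda>x. x\<^sup>2)"
  shows "W2sq \<mu> \<nu> = (\<integral>t. (quantile \<mu> t - quantile \<nu> t)\<^sup>2 \<partial>uniform01)"
proof -
  have "(INF \<pi>\<in>couplings \<mu> \<nu>. quadratic_cost \<pi>) = ennreal (\<integral>t. (quantile \<mu> t - quantile \<nu> t)\<^sup>2 \<partial>uniform01)"
  proof (rule antisym)
    show "(INF \<pi>\<in>couplings \<mu> \<nu>. quadratic_cost \<pi>) \<le> ennreal (\<integral>t. (quantile \<mu> t - quantile \<nu> t)\<^sup>2 \<partial>uniform01)"
      using INF_quadratic_cost_le[OF prob_space_uniform01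
          square_integrable_quantile[OF \<mu> assms(3)] square_integrable_quantile[OF \<nu> assms(4)]]
      by (simp add: distr_quantile_uniform01 \<mu> \<nu>)
    show "ennreal (\<integral>t. (quantile \<mu> t - quantile \<nu> t)\<^sup>2 \<partial>uniform01) \<le> (INF \<pi>\<in>couplings \<mu> \<nu>. quadratic_cost \<pi>)"
      by (rule INF_greatest) (rule quadratic_cost_ge_quantile[OF assms])
  qed
  then show ?thesis
    unfolding W2sq_def by (simp add: integral_nonneg_AE)
qed

section \<open>Wasserstein barycenters on the real line\<close>

lemma sum_weighted_square_dev:
  fixes w q :: "'i \<Rightarrow> real"
  assumes "(\<Sum>i\<in>I. w i) = 1"
  shows "(\<Sum>i\<in>I. w i * (q i - r)\<^sup>2) =
    (\<Sum>i\<in>I. w i * (q i - (\<Sum>j\<in>I. w j * q j))\<^sup>2) + ((\<Sum>j\<in>I. w j * q j) - r)\<^sup>2"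
proof -
  define m where "m = (\<Sum>j\<in>I. w j * q j)"
  have expand: "(\<Sum>i\<in>I. w i * (q i - c)\<^sup>2) = (\<Sum>i\<in>I. w i * (q i)\<^sup>2) - 2 * c * m + c\<^sup>2" for c
  proof -
    have "(\<Sum>i\<in>I. w i * (q i - c)\<^sup>2) = (\<Sum>i\<in>I. w i * (q i)\<^sup>2 - 2 * c * (w i * q i) + c\<^sup>2 * w i)"
      by (rule sum.cong) (auto simp: power2_diff algebra_simps)
    also have "\<dots> = (\<Sum>i\<in>I. w i * (q i)\<^sup>2) - 2 * c * m + c\<^sup>2 * (\<Sum>i\<in>I. w i)"
      by (simp add: sum.distrib sum_subtractf sum_distrib_left m_def)
    finally show ?thesis
      using assms by simp
  qed
  show ?thesis
    unfolding m_def[symmetric] expand by (simp add: power2_diff algebra_simps power2_eq_square)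
qed

definition barycenter_quantile :: "'i set \<Rightarrow> ('i \<Rightarrow> real) \<Rightarrow> ('i \<Rightarrow> real measure) \<Rightarrow> real \<Rightarrow> real" where
  "barycenter_quantile I w \<mu> t = (\<Sum>i\<in>I. w i * quantile (\<mu> i) t)"

lemma borel_measurable_barycenter_quantile:
  assumes "\<And>i. i \<in> I \<Longrightarrow> real_distribution (\<mu> i)"
  shows "barycenter_quantile I w \<mu> \<in> borel_measurable borel"
  unfolding barycenter_quantile_def[abs_def]
  by (intro borel_measurable_sum borel_measurable_times borel_measurable_const borel_measurable_quantile assms)

lemma square_integrable_barycenter_quantile:
  assumes "finite I" "\<And>i. i \<in> I \<Longrightarrow> real_distribution (\<mu> i)" "\<And>i. i \<in> I \<Longrightarrow> integrable (\<mu> i) (\<lambda>x. x\<^sup>2)"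
  shows "square_integrable uniform01 (barycenter_quantile I w \<mu>)"
  unfolding barycenter_quantile_def[abs_def]
  by (intro square_integrable_sum square_integrable_quantile assms)

lemma distr_barycenter_quantile_in_P2:
  assumes "finite I" "\<And>i. i \<in> I \<Longrightarrow> real_distribution (\<mu> i)" "\<And>i. i \<in> I \<Longrightarrow> integrable (\<mu> i) (\<lambda>x. x\<^sup>2)"
  shows "distr uniform01 borel (barycenter_quantile I w \<mu>) \<in> P2"
proof -
  have sq: "square_integrable uniform01 (barycenter_quantile I w \<mu>)"
    using assms by (rule square_integrable_barycenter_quantile)
  then have "barycenter_quantile I w \<mu> \<in> borel_measurable uniform01"
    by (simp add: square_integrable_def)
  then show ?thesis
    using sq prob_space.prob_space_distr[OF prob_space_uniform01]
    by (simp add: P2_def square_integrable_distr)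
qed

lemma weighted_W2sq_ge:
  assumes "finite I" and \<mu>: "\<And>i. i \<in> I \<Longrightarrow> real_distribution (\<mu> i)"
    and sq: "\<And>i. i \<in> I \<Longrightarrow> integrable (\<mu> i) (\<lambda>x. x\<^sup>2)"
    and w: "(\<Sum>i\<in>I. w i) = 1" and "\<nu> \<in> P2"
  shows "(\<Sum>i\<in>I. w i * (\<integral>t. (quantile (\<mu> i) t - barycenter_quantile I w \<mu> t)\<^sup>2 \<partial>uniform01))
    \<le> (\<Sum>i\<in>I. w i * W2sq (\<mu> i) \<nu>)"
proof -
  have \<nu>: "real_distribution \<nu>" "integrable \<nu> (\<lambda>x. x\<^sup>2)"
    using \<open>\<nu> \<in> P2\<close> by (auto simp: P2_def real_distribution_def real_distribution_axioms_def)
  have Q: "square_integrable uniform01 (quantile (\<mu> i))" if "i \<in> I" for i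
    using \<mu>[OF that] sq[OF that] by (rule square_integrable_quantile)
  have Q\<^sub>\<nu>: "square_integrable uniform01 (quantile \<nu>)"
    using \<nu> by (rule square_integrable_quantile)
  have Q\<^sub>b: "square_integrable uniform01 (barycenter_quantile I w \<mu>)"
    using assms(1) \<mu> sq by (rule square_integrable_barycenter_quantile)
  have "(\<Sum>i\<in>I. w i * (\<integral>t. (quantile (\<mu> i) t - barycenter_quantile I w \<mu> t)\<^sup>2 \<partial>uniform01))
      = (\<integral>t. (\<Sum>i\<in>I. w i * (quantile (\<mu> i) t - barycenter_quantile I w \<mu> t)\<^sup>2) \<partial>uniform01)"
    by (subst Bochner_Integration.integral_sum) (auto intro!: integrable_square_diff Q Q\<^sub>b)
  also have "\<dots> \<le> (\<integral>t. (\<Sum>i\<in>I. w i * (quantile (\<mu> i) t - quantile \<nu> t)\<^sup>2) \<partial>uniform01)"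
  proof (rule integral_mono)
    fix t
    show "(\<Sum>i\<in>I. w i * (quantile (\<mu> i) t - barycenter_quantile I w \<mu> t)\<^sup>2)
        \<le> (\<Sum>i\<in>I. w i * (quantile (\<mu> i) t - quantile \<nu> t)\<^sup>2)"
      using sum_weighted_square_dev[OF w, of "\<lambda>i. quantile (\<mu> i) t" "quantile \<nu> t"]
      by (simp add: barycenter_quantile_def)
  qed (auto intro!: integrable_square_diff Q Q\<^sub>\<nu> Q\<^sub>b)
  also have "\<dots> = (\<Sum>i\<in>I. w i * (\<integral>t. (quantile (\<mu> i) t - quantile \<nu> t)\<^sup>2 \<partial>uniform01))"
    by (subst Bochner_Integration.integral_sum) (auto intro!: integrable_square_diff Q Q\<^sub>\<nu>)
  also have "\<dots> = (\<Sum>i\<in>I. w i * W2sq (\<mu> i) \<nu>)"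
    by (rule sum.cong) (simp_all add: W2sq_quantile \<mu> sq \<nu>)
  finally show ?thesis .
qed

lemma weighted_W2sq_barycenter_le:
  assumes "finite I" and \<mu>: "\<And>i. i \<in> I \<Longrightarrow> real_distribution (\<mu> i)"
    and "\<And>i. i \<in> I \<Longrightarrow> integrable (\<mu> i) (\<lambda>x. x\<^sup>2)" and w: "\<And>i. i \<in> I \<Longrightarrow> 0 \<le> w i"
  shows "(\<Sum>i\<in>I. w i * W2sq (\<mu> i) (distr uniform01 borel (barycenter_quantile I w \<mu>)))
    \<le> (\<Sum>i\<in>I. w i * (\<integral>t. (quantile (\<mu> i) t - barycenter_quantile I w \<mu> t)\<^sup>2 \<partial>uniform01))"
proof (rule sum_mono)
  fix i
  assume i: "i \<in> I"
  have "W2sq (\<mu> i) (distr uniform01 borel (barycenter_quantile I w \<mu>))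
      = W2sq (distr uniform01 borel (quantile (\<mu> i))) (distr uniform01 borel (barycenter_quantile I w \<mu>))"
    by (simp add: distr_quantile_uniform01 \<mu> i)
  also have "\<dots> \<le> (\<integral>t. (quantile (\<mu> i) t - barycenter_quantile I w \<mu> t)\<^sup>2 \<partial>uniform01)"
    by (intro W2sq_distr_le prob_space_uniform01 square_integrable_quantile
        square_integrable_barycenter_quantile assms i)
  finally show "w i * W2sq (\<mu> i) (distr uniform01 borel (barycenter_quantile I w \<mu>))
      \<le> w i * (\<integral>t. (quantile (\<mu> i) t - barycenter_quantile I w \<mu> t)\<^sup>2 \<partial>uniform01)"
    by (rule mult_left_mono) (rule w[OF i])
qed

lemma INF_weighted_W2sq:
  assumes "finite I" and "\<And>i. i \<in> I \<Longrightarrow> real_distribution (\<mu> i)"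
    and "\<And>i. i \<in> I \<Longrightarrow> integrable (\<mu> i) (\<lambda>x. x\<^sup>2)"
    and "\<And>i. i \<in> I \<Longrightarrow> 0 \<le> w i" and "(\<Sum>i\<in>I. w i) = 1"
  shows "(INF \<nu>\<in>P2. \<Sum>i\<in>I. w i * W2sq (\<mu> i) \<nu>)
    = (\<Sum>i\<in>I. w i * (\<integral>t. (quantile (\<mu> i) t - barycenter_quantile I w \<mu> t)\<^sup>2 \<partial>uniform01))"
proof -
  let ?cost = "\<lambda>\<nu>. \<Sum>i\<in>I. w i * W2sq (\<mu> i) \<nu>"
  let ?V = "\<Sum>i\<in>I. w i * (\<integral>t. (quantile (\<mu> i) t - barycenter_quantile I w \<mu> t)\<^sup>2 \<partial>uniform01)"
  let ?barycenter = "distr uniform01 borel (barycenter_quantile I w \<mu>)"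
  have lower: "?V \<le> ?cost \<nu>" if "\<nu> \<in> P2" for \<nu>
    by (rule weighted_W2sq_ge) (use assms that in auto)
  have "?barycenter \<in> P2"
    by (rule distr_barycenter_quantile_in_P2) (use assms in auto)
  moreover have "bdd_below (?cost ` P2)"
    by (rule bdd_belowI2) (rule lower)
  ultimately have "(INF \<nu>\<in>P2. ?cost \<nu>) \<le> ?cost ?barycenter"
    by (intro cINF_lower)
  also have "\<dots> \<le> ?V"
    by (rule weighted_W2sq_barycenter_le) (use assms in auto)
  finally show ?thesis
    using \<open>?barycenter \<in> P2\<close> by (intro antisym cINF_greatest lower) auto
qed

section \<open>Risk of the fair predictors\<close>

lemma risk_fstar_alpha:
  "risk M X S K w fstar (fstar_alpha M X S K w fstar \<alpha>)
    = (1 - sqrt \<alpha>)\<^sup>2 * risk M X S K w fstar (fstar_alpha M X S K w fstar 0)"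
proof -
  have shrink: "fstar_alpha M X S K w fstar \<alpha> x s - fstar x s
      = (1 - sqrt \<alpha>) * (fstar_alpha M X S K w fstar 0 x s - fstar x s)" for x s
    by (simp add: fstar_alpha_def algebra_simps)
  show ?thesis
    unfolding risk_def shrink power_mult_distrib integral_mult_right_zero sum_distrib_left
    by (rule sum.cong[OF refl]) (simp add: algebra_simps)
qed

locale sensitive_group_model =
  fixes M :: "'a measure" and X :: "'a \<Rightarrow> 'x" and N :: "'x measure" and S :: "'a \<Rightarrow> nat"
    and K :: nat and fstar :: "'x \<Rightarrow> nat \<Rightarrow> real"
  assumes prob_space_M: "prob_space M"
    and measurable_X[measurable]: "X \<in> M \<rightarrow>\<^sub>M N"
    and measurable_S[measurable]: "S \<in> M \<rightarrow>\<^sub>M count_space UNIV"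
    and S_range: "\<And>\<omega>. \<omega> \<in> space M \<Longrightarrow> S \<omega> \<in> {1..K}"
    and group_measure_pos: "\<And>s. s \<in> {1..K} \<Longrightarrow> measure M {\<omega> \<in> space M. S \<omega> = s} > 0"
    and measurable_fstar[measurable]: "\<And>s. (\<lambda>x. fstar x s) \<in> borel_measurable N"
    and atomless: "\<And>s x. s \<in> {1..K} \<Longrightarrow> measure (cond_law M X S fstar s) {x} = 0"
    and square_integrable_law: "\<And>s. s \<in> {1..K} \<Longrightarrow> integrable (cond_law M X S fstar s) (\<lambda>x. x\<^sup>2)"
begin

abbreviation law :: "nat \<Rightarrow> real measure" where
  "law \<equiv> cond_law M X S fstar"

lemma sets_cond_meas[measurable_cong]: "sets (cond_meas M S s) = sets M"
  by (simp add: cond_meas_def)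

lemma prob_space_cond_meas:
  assumes "s \<in> {1..K}"
  shows "prob_space (cond_meas M S s)"
proof -
  interpret prob_space M
    by (rule prob_space_M)
  show ?thesis
    unfolding cond_meas_def
    using group_measure_pos[OF assms] by (intro prob_space_uniform_measure) (simp_all add: emeasure_eq_measure)
qed

lemma AE_cond_meas: "AE \<omega> in cond_meas M S s. S \<omega> = s"
  unfolding cond_meas_def by (rule AE_uniform_measureI) (auto intro!: AE_I2)

lemma measurable_at_group:
  assumes "\<And>s. s \<in> {1..K} \<Longrightarrow> (\<lambda>\<omega>. F \<omega> s) \<in> borel_measurable M"
  shows "(\<lambda>\<omega>. F \<omega> (S \<omega>)) \<in> borel_measurable M"
proof -
  have "S \<in> M \<rightarrow>\<^sub>M count_space {1..K}"
    using S_range by (subst measurable_count_space_eq2_countable) auto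
  then show ?thesis
    using measurable_compose_countable'[of "{1..K}" "\<lambda>s \<omega>. F \<omega> s" M borel S] assms by auto
qed

lemma measurable_fstar_at_group[measurable]: "(\<lambda>\<omega>. fstar (X \<omega>) (S \<omega>)) \<in> borel_measurable M"
  by (rule measurable_at_group[where F="\<lambda>\<omega> s. fstar (X \<omega>) s"]) measurable

lemma real_distribution_law:
  assumes "s \<in> {1..K}"
  shows "real_distribution (law s)"
proof -
  interpret prob_space "cond_meas M S s"
    using assms by (rule prob_space_cond_meas)
  show ?thesis
    unfolding cond_law_def by (rule real_distribution_distr) measurable
qed

text \<open>The optimal transport map from \<open>law r\<close> to the barycenter.\<close>

definition transport_map :: "(nat \<Rightarrow> real) \<Rightarrow> nat \<Rightarrow> real \<Rightarrow> real" where
  "transport_map w r y = barycenter_quantile {1..K} w law (cdf (law r) y)"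

lemma fstar_alpha0_eq_transport_map:
  "fstar_alpha M X S K w fstar 0 x r = transport_map w r (fstar x r)"
  by (simp add: fstar_alpha_def transport_map_def barycenter_quantile_def)

lemma borel_measurable_transport_map:
  assumes "r \<in> {1..K}"
  shows "transport_map w r \<in> borel_measurable borel"
proof -
  have [measurable]: "cdf (law r) \<in> borel_measurable borel"
    "barycenter_quantile {1..K} w law \<in> borel_measurable borel"
    using assms by (auto intro!: borel_measurable_cdf borel_measurable_barycenter_quantile real_distribution_law)
  show ?thesis
    unfolding transport_map_def[abs_def] by measurable
qed

lemma transport_map_quantile:
  assumes "s \<in> {1..K}" "0 < t" "t < 1"
  shows "transport_map w s (quantile (law s) t) = barycenter_quantile {1..K} w law t"
  using cdf_quantile[OF real_distribution_law[OF assms(1)] atomless[OF assms(1)] assms(2,3)]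
  by (simp add: transport_map_def)

lemma cond_risk_fstar_alpha0:
  assumes s: "s \<in> {1..K}"
  shows "(\<integral>\<omega>. (fstar_alpha M X S K w fstar 0 (X \<omega>) (S \<omega>) - fstar (X \<omega>) (S \<omega>))\<^sup>2 \<partial>cond_meas M S s)
    = (\<integral>t. (quantile (law s) t - barycenter_quantile {1..K} w law t)\<^sup>2 \<partial>uniform01)"
proof -
  define H where "H r y = (transport_map w r y - y)\<^sup>2" for r y
  have H: "H r \<in> borel_measurable borel" if "r \<in> {1..K}" for r
    using borel_measurable_transport_map[OF that] unfolding H_def[abs_def] by measurable
  have "(\<lambda>\<omega>. H (S \<omega>) (fstar (X \<omega>) (S \<omega>))) \<in> borel_measurable M"
  proof (rule measurable_at_group[where F="\<lambda>\<omega> r. H r (fstar (X \<omega>) r)"])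
    fix r
    assume "r \<in> {1..K}"
    then show "(\<lambda>\<omega>. H r (fstar (X \<omega>) r)) \<in> borel_measurable M"
      by (intro measurable_compose[OF _ H]) measurable
  qed
  moreover have "(\<lambda>\<omega>. H s (fstar (X \<omega>) (S \<omega>))) \<in> borel_measurable M"
    by (intro measurable_compose[OF _ H[OF s]]) measurable
  ultimately have "(\<integral>\<omega>. H (S \<omega>) (fstar (X \<omega>) (S \<omega>)) \<partial>cond_meas M S s)
      = (\<integral>\<omega>. H s (fstar (X \<omega>) (S \<omega>)) \<partial>cond_meas M S s)"
    using AE_cond_meas[of s] by (intro integral_cong_AE) auto
  also have "\<dots> = (\<integral>y. H s y \<partial>law s)"
    unfolding cond_law_def by (rule integral_distr[symmetric]) (use H[OF s] in measurable)
  also have "\<dots> = (\<integral>t. H s (quantile (law s) t) \<partial>uniform01)"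
    by (rule integral_quantile_uniform01[OF real_distribution_law[OF s] H[OF s]])
  also have "\<dots> = (\<integral>t. (quantile (law s) t - barycenter_quantile {1..K} w law t)\<^sup>2 \<partial>uniform01)"
    by (rule Bochner_Integration.integral_cong[OF refl])
      (simp add: H_def space_uniform01 transport_map_quantile[OF s] power2_commute)
  finally show ?thesis
    by (simp add: H_def fstar_alpha0_eq_transport_map)
qed

lemma risk_fstar_alpha0_eq_unfairness:
  assumes "\<And>s. s \<in> {1..K} \<Longrightarrow> 0 \<le> w s" and "(\<Sum>s\<in>{1..K}. w s) = 1"
  shows "risk M X S K w fstar (fstar_alpha M X S K w fstar 0) = unfairness M X S K w fstar"
  unfolding risk_def unfairness_def
  by (subst INF_weighted_W2sq)
    (use assms in \<open>auto simp: cond_risk_fstar_alpha0 real_distribution_law square_integrable_law\<close>)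

end

theorem lemma2:
  fixes M :: "'a measure" and X :: "'a \<Rightarrow> real ^ 'p" and S :: "'a \<Rightarrow> nat"
    and K :: nat and w :: "nat \<Rightarrow> real" and fstar :: "real ^ 'p \<Rightarrow> nat \<Rightarrow> real" and \<alpha> :: real
  assumes "prob_space M"
    and "X \<in> measurable M borel" and "S \<in> measurable M (count_space UNIV)"
    and "K \<ge> 1"
    and "\<forall>\<omega>\<in>space M. S \<omega> \<in> {1..K}"
    and "\<forall>s\<in>{1..K}. measure M {\<omega> \<in> space M. S \<omega> = s} > 0"
    and "\<forall>s. (\<lambda>x. fstar x s) \<in> borel_measurable borel"
    and "\<forall>s\<in>{1..K}. w s \<ge> 0" and "(\<Sum>s\<in>{1..K}. w s) = 1"
    and "\<forall>s\<in>{1..K}. \<forall>x. measure (cond_law M X S fstar s) {x} = 0"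
    and "\<forall>s\<in>{1..K}. integrable (cond_law M X S fstar s) (\<lambda>x. x ^ 2)"
    and "0 \<le> \<alpha>" and "\<alpha> \<le> 1"
  shows "risk M X S K w fstar (fstar_alpha M X S K w fstar \<alpha>)
           = (1 - sqrt \<alpha>) ^ 2 * risk M X S K w fstar (fstar_alpha M X S K w fstar 0)
       \<and> (1 - sqrt \<alpha>) ^ 2 * risk M X S K w fstar (fstar_alpha M X S K w fstar 0)
           = (1 - sqrt \<alpha>) ^ 2 * unfairness M X S K w fstar"
proof -
  (* K >= 1 follows from the positive group probabilities, and the scaling identity is algebraic. *)
  have "sensitive_group_model M X borel S K fstar"
    using assms(1-3,5-7,10,11) by (simp add: sensitive_group_model_def)
  then interpret sensitive_group_model M X borel S K fstar .
  have "risk M X S K w fstar (fstar_alpha M X S K w fstar 0) = unfairness M X S K w fstar"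
    using assms(8,9) by (intro risk_fstar_alpha0_eq_unfairness) auto
  then show ?thesis
    using risk_fstar_alpha[of M X S K w fstar \<alpha>] by simp
qed

end
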